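(* For $n\le 5$ (with $n\ge 4$), any two distinct vertices of $\mathrm{PYR}(n)$ are adjacent, i.e. the skeleton of $\mathrm{PYR}(n)$ is a complete graph. For $n\ge 6$, $\mathrm{PYR}(n)$ has a pair of non-adjacent vertices; e.g. for $n=6$ the vertices with codes $\langle 1,0,0\rangle$ and $\langle 0,1,0\rangle$ are non-adjacent.
   Context: Let $K_n$ be the complete undirected graph on vertex set $\{1,\dots,n\}$ with edge set $E$. A Hamiltonian cycle $\langle 1,i_1,\dots,i_r,n,j_1,\dots,j_{n-r-2}\rangle$ is called a pyramidal tour if $i_1<i_2<\dots<i_r$ and $j_1>j_2>\dots>j_{n-r-2}$; tours are undirected. Let $PT_n$ be the set of all pyramidal tours. For $x\in PT_n$ its characteristic vector $x^v\in\mathbb{R}^E$ has $x^v_e=1$ if edge $e$ lies in $x$ and $0$ otherwise. The pyramidal tours polytope is $\mathrm{PYR}(n)=\operatorname{conv}\{x^v : x\in PT_n\}$. Every pyramidal tour contains the edge $\{1,2\}$; the tour is oriented so that vertex $2$ belongs to the increasing part. The code of $x$ is the $0/1$ vector $x^c=(x^c_3,\dots,x^c_{n-1})$ with $x^c_i=1$ if vertex $i$ is visited in the increasing part of $x$ and $x^c_i=0$ otherwise; $x\mapsto x^c$ is a bijection from $PT_n$ onto $\{0,1\}^{n-3}$. Two vertices are adjacent if the segment joining them is a one-dimensional face of the polytope. *)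

theory Defs
  imports "HOL-Analysis.Analysis" "HOL-Library.Function_Algebras"
begin

text \<open>Pointwise real vector space structure on functions, so that the
  space R^E (realised as functions on edges) is a real vector space.\<close>

instantiation "fun" :: (type, real_vector) real_vector
begin
definition scaleR_fun :: "real \<Rightarrow> ('a \<Rightarrow> 'b) \<Rightarrow> 'a \<Rightarrow> 'b"
  where "scaleR_fun r f = (\<lambda>x. r *\<^sub>R f x)"
instance
  by standard (auto simp: scaleR_fun_def fun_eq_iff scaleR_add_right scaleR_add_left)
end

definition cycle_edges :: "nat list \<Rightarrow> nat set set" where
  "cycle_edges vs = {{vs ! k, vs ! ((k + 1) mod length vs)} | k. k < length vs}"

text \<open>The lists is = i_1..i_r and js = j_1..j_{n-r-2} describe the
  pyramidal Hamiltonian cycle 1, i_1, .., i_r, n, j_1, .., j_{n-r-2}.\<close>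
definition pyr_seq :: "nat \<Rightarrow> nat list \<Rightarrow> nat list \<Rightarrow> bool" where
  "pyr_seq n is js \<longleftrightarrow>
     sorted_wrt (<) is \<and> sorted_wrt (>) js \<and>
     set is \<inter> set js = {} \<and> set is \<union> set js = {2..n-1}"

definition tour_edges :: "nat \<Rightarrow> nat list \<Rightarrow> nat list \<Rightarrow> nat set set" where
  "tour_edges n is js = cycle_edges (1 # is @ n # js)"

text \<open>PT_n, tours identified with their (undirected) edge sets.\<close>
definition PT :: "nat \<Rightarrow> nat set set set" where
  "PT n = {tour_edges n is js | is js. pyr_seq n is js}"

text \<open>Characteristic vector in R^E (coordinates outside E are 0).\<close>
definition char_vec :: "nat set set \<Rightarrow> (nat set \<Rightarrow> real)" where
  "char_vec T = (\<lambda>e. if e \<in> T then 1 else 0)"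

definition PYR :: "nat \<Rightarrow> (nat set \<Rightarrow> real) set" where
  "PYR n = convex hull (char_vec ` PT n)"

text \<open>Code of a tour: c is a 0/1 list (c_3,..,c_{n-1}); orientation such
  that vertex 2 lies in the increasing part.\<close>
definition has_code :: "nat \<Rightarrow> nat set set \<Rightarrow> nat list \<Rightarrow> bool" where
  "has_code n T c \<longleftrightarrow> length c = n - 3 \<and>
     (\<exists>is js. pyr_seq n is js \<and> 2 \<in> set is \<and> T = tour_edges n is js \<and>
        (\<forall>i\<in>{3..n-1}. (c ! (i - 3) = 1 \<longleftrightarrow> i \<in> set is) \<and> c ! (i - 3) \<in> {0, 1}))"

definition adjacent_in :: "'a::real_vector set \<Rightarrow> 'a \<Rightarrow> 'a \<Rightarrow> bool" where
  "adjacent_in P x y \<longleftrightarrow> x \<noteq> y \<and> closed_segment x y face_of P"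

end

theory Submission
  imports Defs
begin

text \<open>
  Characteristic vectors of tours are distinct 0/1 vectors, so each of them is a vertex of PYR(n),
  and a segment between two vertices is an edge of the polytope as soon as some linear functional
  attains its maximum over the vertices exactly at the two endpoints. For n = 4, 5 every tour uses
  an edge that no other tour uses; summing the coordinates of the private edges of two tours gives
  such a functional. For n \<ge> 6 the tours X, Y with codes 1,0,...,0 and 0,1,0,...,0 and two further
  tours Z, W all contain the path 5, ..., n and satisfy X + Y = Z + W. The segments XY and ZW then
  share their midpoint, so a face containing XY would contain Z, which does not lie on XY.
\<close>

section \<open>Faces cut out by linear functionals\<close>

lemma face_of_Int_level_set:
  fixes h :: "'a::real_vector \<Rightarrow> real"
  assumes h: "linear h" and "convex S" and le: "\<And>x. x \<in> S \<Longrightarrow> h x \<le> c"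
  shows "S \<inter> {x. h x = c} face_of S"
proof -
  have ends: "h a = c \<and> h b = c"
    if "a \<in> S" "b \<in> S" "x \<in> open_segment a b" "h x = c" for a b x
  proof -
    obtain u where u: "0 < u" "u < 1" "x = (1 - u) *\<^sub>R a + u *\<^sub>R b"
      using \<open>x \<in> open_segment a b\<close> by (auto simp: in_segment)
    have "c = (1 - u) * h a + u * h b"
      using \<open>h x = c\<close> u(3) by (simp add: linear_add[OF h] linear_scale[OF h])
    then have "(1 - u) * (c - h a) + u * (c - h b) = 0"
      by (simp add: algebra_simps)
    moreover have "0 \<le> (1 - u) * (c - h a)" "0 \<le> u * (c - h b)"
      using le that(1,2) u(1,2) by simp_all
    ultimately have "(1 - u) * (c - h a) = 0" "u * (c - h b) = 0" by linarith+
    then show ?thesis using u(1,2) by simp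
  qed
  have "convex (S \<inter> {x. h x = c})"
    using convex_linear_vimage[OF h convex_singleton[of c]] \<open>convex S\<close>
    by (simp add: vimage_def convex_Int)
  then show ?thesis
    unfolding face_of_def using ends by blast
qed

lemma convex_hull_Int_level_set:
  fixes h :: "'a::real_vector \<Rightarrow> real"
  assumes h: "linear h" and V: "finite V" and le: "\<And>v. v \<in> V \<Longrightarrow> h v \<le> c"
  shows "convex hull V \<inter> {x. h x = c} = convex hull {v \<in> V. h v = c}"
proof
  show "convex hull V \<inter> {x. h x = c} \<subseteq> convex hull {v \<in> V. h v = c}"
  proof
    fix x assume "x \<in> convex hull V \<inter> {x. h x = c}"
    then obtain u where u0: "\<forall>v\<in>V. 0 \<le> u v" and u1: "sum u V = 1"
      and x: "(\<Sum>v\<in>V. u v *\<^sub>R v) = x" and hx: "h x = c"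
      using convex_hull_finite[OF V] by auto
    have "(\<Sum>v\<in>V. u v * (c - h v)) = c * sum u V - h x"
      unfolding x[symmetric] by (simp add: linear_sum[OF h] linear_scale[OF h] algebra_simps sum_subtractf sum_distrib_left)
    then have "(\<Sum>v\<in>V. u v * (c - h v)) = 0" using u1 hx by simp
    moreover have "\<forall>v\<in>V. 0 \<le> u v * (c - h v)" using u0 le by simp
    ultimately have "\<forall>v\<in>V. u v * (c - h v) = 0"
      using sum_nonneg_eq_0_iff[OF V, of "\<lambda>v. u v * (c - h v)"] by simp
    define W where "W = {v \<in> V. h v = c}"
    have W: "W \<subseteq> V" and off: "\<forall>v\<in>V - W. u v = 0"
      using \<open>\<forall>v\<in>V. u v * (c - h v) = 0\<close> by (auto simp: W_def)
    have "(\<Sum>v\<in>W. u v *\<^sub>R v) = x" "sum u W = 1"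
      using sum.mono_neutral_left[OF V W, of "\<lambda>v. u v *\<^sub>R v"] sum.mono_neutral_left[OF V W, of u]
        off x u1 by simp_all
    then show "x \<in> convex hull W"
      using convex_hull_finite[OF finite_subset[OF W V]] W u0 by blast
  qed
  have "convex (convex hull V \<inter> {x. h x = c})"
    using convex_linear_vimage[OF h convex_singleton[of c]] by (simp add: vimage_def convex_Int)
  then show "convex hull {v \<in> V. h v = c} \<subseteq> convex hull V \<inter> {x. h x = c}"
    by (rule hull_minimal[rotated]) (auto intro: hull_inc)
qed

lemma convex_hull_face_of_convex_hull:
  fixes h :: "'a::real_vector \<Rightarrow> real"
  assumes h: "linear h" and V: "finite V" and "W \<subseteq> V"
    and on_W: "\<And>v. v \<in> W \<Longrightarrow> h v = c" and below: "\<And>v. v \<in> V - W \<Longrightarrow> h v < c"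
  shows "convex hull W face_of convex hull V"
proof -
  have le: "h v \<le> c" if "v \<in> V" for v
    using on_W below that by (cases "v \<in> W") force+
  have "convex {x. h x \<le> c}"
    using convex_linear_vimage[OF h, of "{..c}"] by (simp add: vimage_def)
  then have "\<forall>x\<in>convex hull V. h x \<le> c"
    using le hull_minimal[of V "{x. h x \<le> c}" convex] by blast
  then have "convex hull V \<inter> {x. h x = c} face_of convex hull V"
    using face_of_Int_level_set[OF h] by simp
  moreover have "{v \<in> V. h v = c} = W"
    using \<open>W \<subseteq> V\<close> on_W below by fastforce
  ultimately show ?thesis
    using convex_hull_Int_level_set[OF h V le] by simp
qed

lemma closed_segment_not_face_of_parallelogram:
  fixes x y z w :: "'a::real_vector"
  assumes "x + y = z + w" and "z \<in> P" "w \<in> P" and "z \<notin> closed_segment x y"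
  shows "\<not> closed_segment x y face_of P"
proof
  assume face: "closed_segment x y face_of P"
  have mid: "midpoint x y = midpoint z w"
    using assms(1) by (simp add: midpoint_def)
  have "z \<noteq> w"
    using assms(4) mid midpoint_in_closed_segment[of x y] by auto
  then have "midpoint x y \<in> open_segment z w"
    using mid by simp
  then show False
    using face_ofD[OF face _ assms(2,3) midpoint_in_closed_segment] assms(4) by blast
qed

lemma linear_weighted_sum_coordinates:
  "linear (\<lambda>v::'a \<Rightarrow> real. \<Sum>e\<in>U. w e * v e)"
  by (rule linearI) (simp_all add: scaleR_fun_def sum.distrib sum_distrib_left algebra_simps)

lemma char_vec_extreme_point_of_convex_hull:
  assumes F: "finite F" "\<And>C. C \<in> F \<Longrightarrow> finite C" and "T \<in> F"
  shows "char_vec T extreme_point_of convex hull (char_vec ` F)"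
proof -
  \<comment> \<open>Among the 0/1 vectors of the family, h is maximal exactly at the vector of T.\<close>
  define h where "h v = (\<Sum>e\<in>\<Union>F. (if e \<in> T then 1 else -1) * v e)" for v :: "nat set \<Rightarrow> real"
  have "linear h"
    unfolding h_def[abs_def] by (rule linear_weighted_sum_coordinates)
  have "h (char_vec C) < h (char_vec T)" if "C \<in> F" "char_vec C \<noteq> char_vec T" for C
    unfolding h_def
  proof (rule sum_strict_mono_ex1)
    show "finite (\<Union>F)" using F by blast
    show "\<forall>e\<in>\<Union>F. (if e \<in> T then 1 else -1) * char_vec C e \<le> (if e \<in> T then 1 else -1) * char_vec T e"
      by (simp add: char_vec_def)
    obtain e where "e \<in> C \<longleftrightarrow> e \<notin> T"
      using \<open>char_vec C \<noteq> char_vec T\<close> by (force simp: char_vec_def fun_eq_iff)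
    then show "\<exists>e\<in>\<Union>F. (if e \<in> T then 1 else -1) * char_vec C e < (if e \<in> T then 1 else -1) * char_vec T e"
      using \<open>C \<in> F\<close> \<open>T \<in> F\<close> by (intro bexI[of _ e]) (auto simp: char_vec_def)
  qed
  then have "convex hull {char_vec T} face_of convex hull (char_vec ` F)"
    using \<open>T \<in> F\<close> F(1)
    by (intro convex_hull_face_of_convex_hull[OF \<open>linear h\<close>]) auto
  then show ?thesis
    by (simp add: face_of_singleton)
qed

definition has_private_elements :: "'a set set \<Rightarrow> bool" where
  "has_private_elements F \<longleftrightarrow> (\<forall>A\<in>F. \<exists>e\<in>A. \<forall>C\<in>F. C \<noteq> A \<longrightarrow> e \<notin> C)"

lemma closed_segment_char_vec_face_of_convex_hull:
  assumes "finite F" "A \<in> F" "B \<in> F" "A \<noteq> B"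
    and a: "a \<in> A" "\<And>C. C \<in> F \<Longrightarrow> C \<noteq> A \<Longrightarrow> a \<notin> C"
    and b: "b \<in> B" "\<And>C. C \<in> F \<Longrightarrow> C \<noteq> B \<Longrightarrow> b \<notin> C"
  shows "closed_segment (char_vec A) (char_vec B) face_of convex hull (char_vec ` F)"
proof -
  define h where "h v = (\<Sum>e\<in>{a, b}. v e)" for v :: "nat set \<Rightarrow> real"
  have "linear h"
    using linear_weighted_sum_coordinates[where U = "{a, b}" and w = "\<lambda>_. 1"] by (simp add: h_def[abs_def])
  have "a \<noteq> b" "a \<notin> B" "b \<notin> A"
    using assms by blast+
  then have "h (char_vec C) = (if C = A \<or> C = B then 1 else 0)" if "C \<in> F" for C
    using a b that by (auto simp: h_def char_vec_def)
  then have "convex hull {char_vec A, char_vec B} face_of convex hull (char_vec ` F)"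
    using assms(1-3)
    by (intro convex_hull_face_of_convex_hull[OF \<open>linear h\<close>, where c = 1]) auto
  then show ?thesis
    by (simp add: segment_convex_hull)
qed

lemma adjacent_in_convex_hull_char_vec:
  assumes "finite F" "has_private_elements F"
    and "x extreme_point_of convex hull (char_vec ` F)" "y extreme_point_of convex hull (char_vec ` F)"
    and "x \<noteq> y"
  shows "adjacent_in (convex hull (char_vec ` F)) x y"
proof -
  obtain A B where "A \<in> F" "B \<in> F" "x = char_vec A" "y = char_vec B"
    using assms(3,4) extreme_point_of_convex_hull by blast
  moreover obtain a b where "a \<in> A" "\<forall>C\<in>F. C \<noteq> A \<longrightarrow> a \<notin> C" "b \<in> B" "\<forall>C\<in>F. C \<noteq> B \<longrightarrow> b \<notin> C"
    using assms(2) calculation(1,2) unfolding has_private_elements_def by meson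
  ultimately show ?thesis
    using assms(1,5) closed_segment_char_vec_face_of_convex_hull[of F A B a b]
    by (auto simp: adjacent_in_def)
qed

definition path_edges :: "'a list \<Rightarrow> 'a set set" where
  "path_edges vs = (\<lambda>(a, b). {a, b}) ` set (zip vs (tl vs))"

lemma path_edges_Nil [simp]: "path_edges [] = {}"
  and path_edges_singleton [simp]: "path_edges [v] = {}"
  and path_edges_Cons_Cons [simp]: "path_edges (u # v # vs) = insert {u, v} (path_edges (v # vs))"
  by (simp_all add: path_edges_def)

lemma path_edges_append:
  "xs \<noteq> [] \<Longrightarrow> ys \<noteq> [] \<Longrightarrow> path_edges (xs @ ys) = insert {last xs, hd ys} (path_edges xs \<union> path_edges ys)"
proof (induction xs rule: induct_list012)
  case (3 u v xs)
  then show ?case by (cases xs) auto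
qed (auto simp: neq_Nil_conv)

lemma path_edges_Cons: "path_edges (v # vs) = (if vs = [] then {} else insert {v, hd vs} (path_edges vs))"
  by (cases vs) auto

lemma path_edges_rev [simp]: "path_edges (rev vs) = path_edges vs"
  by (induction vs) (auto simp: path_edges_append path_edges_Cons hd_rev last_rev insert_commute)

lemma path_edges_subset: "e \<in> path_edges vs \<Longrightarrow> e \<subseteq> set vs"
  by (induction vs) (auto simp: path_edges_Cons split: if_splits)

lemma finite_path_edges [simp]: "finite (path_edges vs)"
  by (simp add: path_edges_def)

lemma path_edges_conv_nth: "path_edges vs = (\<lambda>k. {vs ! k, vs ! Suc k}) ` {k. Suc k < length vs}"
  by (force simp: path_edges_def set_zip nth_tl)

lemma cycle_edges_Cons: "cycle_edges (v # vs) = insert {last (v # vs), v} (path_edges (v # vs))"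
proof -
  let ?xs = "v # vs"
  have "cycle_edges ?xs = (\<lambda>k. {?xs ! k, ?xs ! ((k + 1) mod length ?xs)}) ` {..<Suc (length vs)}"
    unfolding cycle_edges_def by auto
  also have "\<dots> = insert {?xs ! length vs, v} ((\<lambda>k. {?xs ! k, ?xs ! ((k + 1) mod length ?xs)}) ` {..<length vs})"
    by (simp add: lessThan_Suc)
  also have "(\<lambda>k. {?xs ! k, ?xs ! ((k + 1) mod length ?xs)}) ` {..<length vs} = path_edges ?xs"
    unfolding path_edges_conv_nth by (rule image_cong) auto
  finally show ?thesis
    by (simp add: last_conv_nth)
qed

lemma cycle_edges_through_path:
  "P \<noteq> [] \<Longrightarrow> cycle_edges ([u, v, a] @ P @ [b]) = {{u, v}, {v, a}, {a, hd P}, {last P, b}, {b, u}} \<union> path_edges P"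
proof -
  assume "P \<noteq> []"
  then have "path_edges (a # P @ [b]) = insert {a, hd P} (insert {last P, b} (path_edges P))"
    using path_edges_append[of "[a]" "P @ [b]"] path_edges_append[of P "[b]"] by simp
  then show ?thesis
    by (simp add: cycle_edges_Cons) blast
qed

section \<open>Pyramidal tours\<close>

lemma pyr_seq_unique:
  assumes "pyr_seq n xs ys" "pyr_seq n xs' ys'" "set xs = set xs'"
  shows "xs = xs' \<and> ys = ys'"
proof -
  have "set (rev ys) = set (rev ys')"
    using assms unfolding pyr_seq_def by auto
  then have "rev ys = rev ys'"
    using assms by (intro strict_sorted_equal) (auto simp: pyr_seq_def sorted_wrt_rev)
  then show ?thesis
    using assms strict_sorted_equal by (auto simp: pyr_seq_def)
qed

text \<open>The tour whose increasing part is S; the complementary set gives the same tour, traversed backwards.\<close>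

definition pyramidal_tour :: "nat \<Rightarrow> nat set \<Rightarrow> nat set set" where
  "pyramidal_tour n S = tour_edges n (sorted_list_of_set S) (rev (sorted_list_of_set ({2..n-1} - S)))"

lemma pyr_seq_sorted_list_of_set:
  "S \<subseteq> {2..n-1} \<Longrightarrow> pyr_seq n (sorted_list_of_set S) (rev (sorted_list_of_set ({2..n-1} - S)))"
  using finite_subset[of S "{2..n-1}"] by (auto simp: pyr_seq_def sorted_wrt_rev)

lemma pyramidal_tour_eq:
  assumes "pyr_seq n xs ys"
  shows "pyramidal_tour n (set xs) = tour_edges n xs ys"
proof -
  have "set xs \<subseteq> {2..n-1}"
    using assms by (auto simp: pyr_seq_def)
  then have "xs = sorted_list_of_set (set xs)" "ys = rev (sorted_list_of_set ({2..n-1} - set xs))"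
    using pyr_seq_unique[OF assms pyr_seq_sorted_list_of_set] by simp_all
  then show ?thesis
    unfolding pyramidal_tour_def by metis
qed

lemma PT_eq: "PT n = pyramidal_tour n ` Pow {2..n-1}"
proof (intro equalityI subsetI)
  fix T assume "T \<in> PT n"
  then obtain xs ys where "pyr_seq n xs ys" "T = tour_edges n xs ys"
    by (auto simp: PT_def)
  moreover have "set xs \<subseteq> {2..n-1}"
    using \<open>pyr_seq n xs ys\<close> by (auto simp: pyr_seq_def)
  ultimately show "T \<in> pyramidal_tour n ` Pow {2..n-1}"
    using pyramidal_tour_eq by blast
next
  fix T assume "T \<in> pyramidal_tour n ` Pow {2..n-1}"
  then show "T \<in> PT n"
    using pyr_seq_sorted_list_of_set by (auto simp: PT_def pyramidal_tour_def)
qed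

lemma pyramidal_tour_in_PT: "S \<subseteq> {2..n-1} \<Longrightarrow> pyramidal_tour n S \<in> PT n"
  by (simp add: PT_eq)

lemma finite_PT: "finite (PT n)"
  by (simp add: PT_eq)

lemma finite_tour: "T \<in> PT n \<Longrightarrow> finite T"
  by (auto simp: PT_def tour_edges_def cycle_edges_Cons)

lemma char_vec_extreme_point_of_PYR: "T \<in> PT n \<Longrightarrow> char_vec T extreme_point_of PYR n"
  unfolding PYR_def using finite_PT finite_tour by (rule char_vec_extreme_point_of_convex_hull)

lemma PT_4: "PT 4 = {{{1,2},{2,3},{3,4},{4,1}}, {{1,2},{2,4},{4,3},{3,1}}}"
proof -
  have "{2..4-1} = {2,3::nat}" by auto
  then show ?thesis
    by (simp add: PT_eq Pow_insert pyramidal_tour_def tour_edges_def cycle_edges_Cons insert_Diff_if insert_commute)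
qed

lemma PT_5:
  "PT 5 = {{{1,2},{2,5},{5,4},{4,3},{3,1}}, {{1,2},{2,4},{4,5},{5,3},{3,1}},
           {{1,2},{2,3},{3,5},{5,4},{4,1}}, {{1,2},{2,3},{3,4},{4,5},{5,1}}}"
proof -
  have "{2..5-1} = {2,3,4::nat}" by auto
  then show ?thesis
    by (simp add: PT_eq Pow_insert pyramidal_tour_def tour_edges_def cycle_edges_Cons insert_Diff_if insert_commute)
qed

lemma has_private_elements_PT_4: "has_private_elements (PT 4)"
  by (simp add: PT_4 has_private_elements_def doubleton_eq_iff)

lemma has_private_elements_PT_5: "has_private_elements (PT 5)"
  by (simp add: PT_5 has_private_elements_def doubleton_eq_iff)

lemma adjacent_in_PYR_if_le_5:
  assumes "4 \<le> n" "n \<le> 5" "x extreme_point_of PYR n" "y extreme_point_of PYR n" "x \<noteq> y"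
  shows "adjacent_in (PYR n) x y"
proof -
  have "n = 4 \<or> n = 5"
    using assms(1,2) by auto
  then have "has_private_elements (PT n)"
    using has_private_elements_PT_4 has_private_elements_PT_5 by blast
  then show ?thesis
    using adjacent_in_convex_hull_char_vec[OF finite_PT] assms(3-5) unfolding PYR_def by blast
qed

section \<open>Four tours sharing a long path\<close>

lemma pyramidal_tours_through_path:
  assumes "6 \<le> n"
  defines "P \<equiv> [5..<Suc n]"
  shows "pyramidal_tour n {2, 3} = cycle_edges ([1, 2, 3] @ rev P @ [4])"
    and "pyramidal_tour n {2, 4} = cycle_edges ([1, 2, 4] @ rev P @ [3])"
    and "pyramidal_tour n ({2} \<union> {4..<n}) = cycle_edges ([1, 2, 4] @ P @ [3])"
    and "pyramidal_tour n ({2, 3} \<union> {5..<n}) = cycle_edges ([1, 2, 3] @ P @ [4])"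
proof -
  have P: "P = [5..<n] @ [n]" "[4..<n] = 4 # [5..<n]" "{4..<n} = insert 4 {5..<n}"
    using assms by (auto simp: P_def upt_conv_Cons)
  have "pyr_seq n [2, 3] (rev [4..<n])" "pyr_seq n [2, 4] (rev [5..<n] @ [3])"
    "pyr_seq n (2 # [4..<n]) [3]" "pyr_seq n (2 # 3 # [5..<n]) [4]"
    using assms by (auto simp: pyr_seq_def sorted_wrt_rev sorted_wrt_append)
  from this[THEN pyramidal_tour_eq] show
    "pyramidal_tour n {2, 3} = cycle_edges ([1, 2, 3] @ rev P @ [4])"
    "pyramidal_tour n {2, 4} = cycle_edges ([1, 2, 4] @ rev P @ [3])"
    "pyramidal_tour n ({2} \<union> {4..<n}) = cycle_edges ([1, 2, 4] @ P @ [3])"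
    "pyramidal_tour n ({2, 3} \<union> {5..<n}) = cycle_edges ([1, 2, 3] @ P @ [4])"
    unfolding P by (simp_all add: tour_edges_def insert_commute del: upt_Suc)
qed

lemma pyramidal_tours_edges:
  assumes n: "6 \<le> n"
  defines "Q \<equiv> path_edges [5..<Suc n]"
  shows "pyramidal_tour n {2, 3} = {{1,2},{2,3},{3,n},{5,4},{4,1}} \<union> Q"
    and "pyramidal_tour n {2, 4} = {{1,2},{2,4},{4,n},{5,3},{3,1}} \<union> Q"
    and "pyramidal_tour n ({2} \<union> {4..<n}) = {{1,2},{2,4},{4,5},{n,3},{3,1}} \<union> Q"
    and "pyramidal_tour n ({2, 3} \<union> {5..<n}) = {{1,2},{2,3},{3,5},{n,4},{4,1}} \<union> Q"
proof -
  define P where "P = [5..<Suc n]"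
  have Q: "Q = path_edges P"
    by (simp only: Q_def P_def)
  have "P \<noteq> []" "rev P \<noteq> []" "hd P = 5" "last P = n"
    using n by (simp_all add: P_def)
  then show "pyramidal_tour n {2, 3} = {{1,2},{2,3},{3,n},{5,4},{4,1}} \<union> Q"
    "pyramidal_tour n {2, 4} = {{1,2},{2,4},{4,n},{5,3},{3,1}} \<union> Q"
    "pyramidal_tour n ({2} \<union> {4..<n}) = {{1,2},{2,4},{4,5},{n,3},{3,1}} \<union> Q"
    "pyramidal_tour n ({2, 3} \<union> {5..<n}) = {{1,2},{2,3},{3,5},{n,4},{4,1}} \<union> Q"
    unfolding Q pyramidal_tours_through_path[OF n, folded P_def]
      cycle_edges_through_path[OF \<open>P \<noteq> []\<close>] cycle_edges_through_path[OF \<open>rev P \<noteq> []\<close>]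
    by (simp_all add: hd_rev last_rev)
qed

lemma pyramidal_tours_not_adjacent:
  assumes n: "6 \<le> n"
  defines "x \<equiv> char_vec (pyramidal_tour n {2, 3})" and "y \<equiv> char_vec (pyramidal_tour n {2, 4})"
  shows "x \<noteq> y" and "\<not> adjacent_in (PYR n) x y"
proof -
  define Q where "Q = path_edges [5..<Suc n]"
  define z where "z = char_vec (pyramidal_tour n ({2} \<union> {4..<n}))"
  define w where "w = char_vec (pyramidal_tour n ({2, 3} \<union> {5..<n}))"
  note edges = pyramidal_tours_edges[OF n, folded Q_def]
  have "e \<subseteq> {5..n}" if "e \<in> Q" for e
    using path_edges_subset[of e "[5..<Suc n]"] that by (auto simp: Q_def)
  then have "{2,4} \<notin> Q" "{4,n} \<notin> Q"
    by fastforce+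
  then have coords: "x {2,4} = 0" "y {2,4} = 1" "z {2,4} = 1" "x {4,n} = 0" "y {4,n} = 1" "z {4,n} = 0"
    unfolding x_def y_def z_def edges using n by (auto simp: char_vec_def doubleton_eq_iff)
  then show "x \<noteq> y"
    by auto
  have "x + y = z + w"
  proof
    fix e
    show "(x + y) e = (z + w) e"
      using n unfolding x_def y_def z_def w_def edges
      by (cases "e \<in> Q") (auto simp: char_vec_def doubleton_eq_iff)
  qed
  moreover have "z \<in> PYR n" "w \<in> PYR n"
    unfolding z_def w_def PYR_def using n by (auto intro!: hull_inc imageI pyramidal_tour_in_PT)
  moreover have "z \<notin> closed_segment x y"
  proof
    assume "z \<in> closed_segment x y"
    then obtain t where "z = (1 - t) *\<^sub>R x + t *\<^sub>R y"
      by (auto simp: closed_segment_def)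
    then have "z {2,4} = (1 - t) * x {2,4} + t * y {2,4}" "z {4,n} = (1 - t) * x {4,n} + t * y {4,n}"
      by (simp_all add: scaleR_fun_def)
    then show False
      using coords by simp
  qed
  ultimately show "\<not> adjacent_in (PYR n) x y"
    unfolding adjacent_in_def by (blast dest: closed_segment_not_face_of_parallelogram)
qed

lemma PYR_has_non_adjacent_vertices:
  assumes "6 \<le> n"
  shows "\<exists>x y. x extreme_point_of PYR n \<and> y extreme_point_of PYR n \<and> x \<noteq> y \<and> \<not> adjacent_in (PYR n) x y"
proof -
  have "pyramidal_tour n {2, 3} \<in> PT n" "pyramidal_tour n {2, 4} \<in> PT n"
    using assms by (auto intro: pyramidal_tour_in_PT)
  then show ?thesis
    using pyramidal_tours_not_adjacent[OF assms] char_vec_extreme_point_of_PYR by blast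
qed

lemma has_code_imp_eq_pyramidal_tour:
  assumes "has_code n T c"
  shows "T = pyramidal_tour n (insert 2 {i \<in> {3..n-1}. c ! (i - 3) = 1})"
proof -
  obtain xs ys where seq: "pyr_seq n xs ys" "2 \<in> set xs" "T = tour_edges n xs ys"
    and code: "\<forall>i\<in>{3..n-1}. c ! (i - 3) = 1 \<longleftrightarrow> i \<in> set xs"
    using assms unfolding has_code_def by blast
  have "set xs \<subseteq> {2..n-1}"
    using seq(1) by (auto simp: pyr_seq_def)
  then have "set xs = insert 2 {i \<in> {3..n-1}. c ! (i - 3) = 1}"
    using seq(2) code by (auto simp: Suc_le_eq)
  then show ?thesis
    using pyramidal_tour_eq[OF seq(1)] seq(3) by simp
qed

lemma has_code_6_iff:
  "has_code 6 T [1, 0, 0] \<longleftrightarrow> T = pyramidal_tour 6 {2, 3}"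
  "has_code 6 T [0, 1, 0] \<longleftrightarrow> T = pyramidal_tour 6 {2, 4}"
proof -
  have range: "{3..6-1} = {3, 4, 5::nat}"
    by auto
  have increasing: "{i \<in> {3..6-1}. [1, 0, 0::nat] ! (i - 3) = 1} = {3}"
    "{i \<in> {3..6-1}. [0, 1, 0::nat] ! (i - 3) = 1} = {4}"
    unfolding range by auto
  have "pyr_seq 6 [2, 3] [5, 4]" "pyr_seq 6 [2, 4] [5, 3]"
    by (auto simp: pyr_seq_def)
  then have "has_code 6 (pyramidal_tour 6 {2, 3}) [1, 0, 0]" "has_code 6 (pyramidal_tour 6 {2, 4}) [0, 1, 0]"
    unfolding has_code_def range using pyramidal_tour_eq by force+
  moreover have "has_code 6 T [1, 0, 0] \<Longrightarrow> T = pyramidal_tour 6 {2, 3}"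
    using has_code_imp_eq_pyramidal_tour[of 6 T "[1, 0, 0]"] by (simp only: increasing)
  moreover have "has_code 6 T [0, 1, 0] \<Longrightarrow> T = pyramidal_tour 6 {2, 4}"
    using has_code_imp_eq_pyramidal_tour[of 6 T "[0, 1, 0]"] by (simp only: increasing)
  ultimately show "has_code 6 T [1, 0, 0] \<longleftrightarrow> T = pyramidal_tour 6 {2, 3}"
    "has_code 6 T [0, 1, 0] \<longleftrightarrow> T = pyramidal_tour 6 {2, 4}"
    by blast+
qed

theorem mainTheorem5:
  shows "(\<forall>n. 4 \<le> n \<and> n \<le> 5 \<longrightarrow>
            (\<forall>x y. x extreme_point_of PYR n \<and> y extreme_point_of PYR n \<and> x \<noteq> y
                   \<longrightarrow> adjacent_in (PYR n) x y))
       \<and> (\<forall>n\<ge>6. \<exists>x y. x extreme_point_of PYR n \<and> y extreme_point_of PYR n \<and> x \<noteq> y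
                   \<and> \<not> adjacent_in (PYR n) x y)
       \<and> (\<exists>T1 T2. T1 \<in> PT 6 \<and> has_code 6 T1 [1, 0, 0] \<and>
                  T2 \<in> PT 6 \<and> has_code 6 T2 [0, 1, 0])
       \<and> (\<forall>T1 T2. T1 \<in> PT 6 \<and> has_code 6 T1 [1, 0, 0] \<and>
                  T2 \<in> PT 6 \<and> has_code 6 T2 [0, 1, 0]
                  \<longrightarrow> \<not> adjacent_in (PYR 6) (char_vec T1) (char_vec T2))"
proof (intro conjI allI impI)
  fix n x y
  assume "4 \<le> n \<and> n \<le> 5" "x extreme_point_of PYR n \<and> y extreme_point_of PYR n \<and> x \<noteq> y"
  then show "adjacent_in (PYR n) x y"
    using adjacent_in_PYR_if_le_5 by blast
next
  fix n :: nat
  assume "6 \<le> n"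
  then show "\<exists>x y. x extreme_point_of PYR n \<and> y extreme_point_of PYR n \<and> x \<noteq> y
               \<and> \<not> adjacent_in (PYR n) x y"
    by (rule PYR_has_non_adjacent_vertices)
next
  have "pyramidal_tour 6 {2, 3} \<in> PT 6" "pyramidal_tour 6 {2, 4} \<in> PT 6"
    by (auto intro: pyramidal_tour_in_PT)
  then show "\<exists>T1 T2. T1 \<in> PT 6 \<and> has_code 6 T1 [1, 0, 0] \<and> T2 \<in> PT 6 \<and> has_code 6 T2 [0, 1, 0]"
    using has_code_6_iff by blast
next
  fix T1 T2
  assume "T1 \<in> PT 6 \<and> has_code 6 T1 [1, 0, 0] \<and> T2 \<in> PT 6 \<and> has_code 6 T2 [0, 1, 0]"
  then have "T1 = pyramidal_tour 6 {2, 3}" "T2 = pyramidal_tour 6 {2, 4}"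
    using has_code_6_iff by blast+
  then show "\<not> adjacent_in (PYR 6) (char_vec T1) (char_vec T2)"
    using pyramidal_tours_not_adjacent(2)[of 6] by simp
qed

end
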